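(* Let $X$ be a homogeneous space with the Baire property and $\chi(X)\le\aleph_0$. If there is a continuous transitive action of an $\omega$-narrow group on $X$, then $X$ is separable and metrizable.
   Context: All spaces are Tychonoff. $X$ is homogeneous if for any $x,y\in X$ there is a homeomorphism $h$ of $X$ with $h(x)=y$. A topological group $G$ is $\omega$-narrow if for every neighborhood $U$ of the unit there is a countable $A\subset G$ with $AU=G$. *)

theory Defs
  imports "HOL-Analysis.Analysis" "HOL-Algebra.Group" "HOL-Algebra.Coset"
begin

text \<open>Tychonoff space: completely regular and T1 (here Hausdorff, equivalent under complete regularity).\<close>
definition tychonoff_space :: "'a topology \<Rightarrow> bool" where
  "tychonoff_space X \<longleftrightarrow> completely_regular_space X \<and> Hausdorff_space X"

definition homogeneous_space :: "'a topology \<Rightarrow> bool" where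
  "homogeneous_space X \<longleftrightarrow>
     (\<forall>x\<in>topspace X. \<forall>y\<in>topspace X. \<exists>h. homeomorphic_map X X h \<and> h x = y)"

definition baire_space :: "'a topology \<Rightarrow> bool" where
  "baire_space X \<longleftrightarrow>
     (\<forall>\<U>. countable \<U> \<and> (\<forall>U\<in>\<U>. openin X U \<and> X closure_of U = topspace X)
        \<longrightarrow> X closure_of (topspace X \<inter> \<Inter>\<U>) = topspace X)"

definition topological_group :: "('g, 'm) monoid_scheme \<Rightarrow> 'g topology \<Rightarrow> bool" where
  "topological_group G T \<longleftrightarrow>
     group G \<and> topspace T = carrier G \<and>
     continuous_map (prod_topology T T) T (\<lambda>(x, y). x \<otimes>\<^bsub>G\<^esub> y) \<and>
     continuous_map T T (\<lambda>x. inv\<^bsub>G\<^esub> x)"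

definition omega_narrow :: "('g, 'm) monoid_scheme \<Rightarrow> 'g topology \<Rightarrow> bool" where
  "omega_narrow G T \<longleftrightarrow>
     (\<forall>U. openin T U \<and> \<one>\<^bsub>G\<^esub> \<in> U \<longrightarrow>
        (\<exists>A. countable A \<and> A \<subseteq> carrier G \<and> A <#>\<^bsub>G\<^esub> U = carrier G))"

definition continuous_action ::
  "('g, 'm) monoid_scheme \<Rightarrow> 'g topology \<Rightarrow> 'a topology \<Rightarrow> ('g \<Rightarrow> 'a \<Rightarrow> 'a) \<Rightarrow> bool" where
  "continuous_action G T X act \<longleftrightarrow>
     (\<forall>g\<in>carrier G. \<forall>x\<in>topspace X. act g x \<in> topspace X) \<and>
     (\<forall>x\<in>topspace X. act \<one>\<^bsub>G\<^esub> x = x) \<and>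
     (\<forall>g\<in>carrier G. \<forall>h\<in>carrier G. \<forall>x\<in>topspace X.
        act (g \<otimes>\<^bsub>G\<^esub> h) x = act g (act h x)) \<and>
     continuous_map (prod_topology T X) X (\<lambda>(g, x). act g x)"

definition transitive_action ::
  "('g, 'm) monoid_scheme \<Rightarrow> 'a topology \<Rightarrow> ('g \<Rightarrow> 'a \<Rightarrow> 'a) \<Rightarrow> bool" where
  "transitive_action G X act \<longleftrightarrow>
     (\<forall>x\<in>topspace X. \<forall>y\<in>topspace X. \<exists>g\<in>carrier G. act g x = y)"

end

theory Submission
  imports Defs
begin

(*
  Effros-type lemma: for a neighbourhood U of the identity pick V with V^-1 V \<subseteq> U; by
  omega-narrowness countably many translates aV cover G, so by transitivity the closed sets
  cl(aVx) cover X. By the Baire property one of them has nonempty interior, which meets aVx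
  at some avx, and translating by (av)^-1 puts x into the interior of cl(V^-1 Vx) \<subseteq> cl(Ux).

  Now let (B_n) be a countable local base at x. Choose open U_n \<ni> 1 with
  cl(U_n^-1 U_n U_n x) \<subseteq> B_n (regularity and continuity) and countable A_n with A_n U_n = G.
  The countably many sets a int cl(U_n U_n x), a \<in> A_n, form a base: for y = gx in an open N
  take B_n \<subseteq> g^-1 N and write g = au with u \<in> U_n; then ux \<in> int cl(U_n U_n x) by the
  Effros-type lemma, and a = gu^-1 maps this set into g cl(u^-1 U_n U_n x) \<subseteq> g B_n \<subseteq> N.
  A regular T1 second countable space embeds into a countable power of [0, 1] via Urysohn
  functions, hence is metrizable; it is also separable.
*)

lemma embedding_map_into_cube:
  fixes f :: "'k \<Rightarrow> 'a \<Rightarrow> real"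
  assumes "t1_space X"
    and cont: "\<And>k. k \<in> K \<Longrightarrow> continuous_map X (top_of_set {0..1}) (f k)"
    and sep: "\<And>U x. openin X U \<Longrightarrow> x \<in> U \<Longrightarrow>
                \<exists>k\<in>K. f k x = 0 \<and> (\<forall>y \<in> topspace X - U. f k y = 1)"
  shows "embedding_map X (product_topology (\<lambda>_. top_of_set {0..1}) K) (\<lambda>x. \<lambda>k\<in>K. f k x)"
proof -
  define P where "P = product_topology (\<lambda>_. top_of_set {0..1::real}) K"
  define e where "e = (\<lambda>x. \<lambda>k\<in>K. f k x)"
  have cont_e: "continuous_map X P e"
    unfolding P_def e_def using cont by (auto simp: continuous_map_componentwise)
  have "e x \<noteq> e y" if "x \<in> topspace X" "y \<in> topspace X" "x \<noteq> y" for x y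
  proof -
    have "openin X (topspace X - {y})"
      using closedin_t1_singleton[OF \<open>t1_space X\<close> \<open>y \<in> topspace X\<close>] by blast
    moreover have "x \<in> topspace X - {y}" "y \<in> topspace X - (topspace X - {y})"
      using that by auto
    ultimately obtain k where "k \<in> K" "f k x = 0" "f k y = 1"
      using sep by blast
    then show ?thesis
      unfolding e_def by (metis restrict_apply' zero_neq_one)
  qed
  then have inj: "inj_on e (topspace X)"
    by (meson inj_onI)
  have "open_map X (subtopology P (e ` topspace X)) e"
    unfolding open_map_def
  proof (intro allI impI)
    fix U assume "openin X U"
    show "openin (subtopology P (e ` topspace X)) (e ` U)"
    proof (subst openin_subopen, intro ballI)
      fix z assume "z \<in> e ` U"
      then obtain x where "x \<in> U" "z = e x" by blast
      then obtain k where k: "k \<in> K" "f k x = 0" and one: "\<forall>y \<in> topspace X - U. f k y = 1"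
        using sep \<open>openin X U\<close> by blast
      define N where "N = {w \<in> topspace P. w k \<in> {..<1}}"
      have "continuous_map P euclideanreal (\<lambda>w. w k)"
        unfolding P_def
        using continuous_map_product_projection[OF \<open>k \<in> K\<close>] continuous_map_in_subtopology by blast
      then have "openin P N"
        unfolding N_def by (rule openin_continuous_map_preimage) auto
      moreover have "z \<in> N"
        using cont_e \<open>x \<in> U\<close> \<open>openin X U\<close> openin_subset k
        unfolding N_def \<open>z = e x\<close> by (auto simp: e_def continuous_map_def)
      moreover have "N \<inter> e ` topspace X \<subseteq> e ` U"
        using one k(1) by (force simp: N_def e_def)
      ultimately show "\<exists>T. openin (subtopology P (e ` topspace X)) T \<and> z \<in> T \<and> T \<subseteq> e ` U"
        using \<open>x \<in> U\<close> openin_subset[OF \<open>openin X U\<close>] \<open>z = e x\<close>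
        by (intro exI[of _ "N \<inter> e ` topspace X"]) (auto simp: openin_subtopology_Int)
    qed
  qed
  with cont_e inj have "embedding_map X (subtopology P (e ` topspace X)) e"
    by (intro injective_open_imp_embedding_map) (auto simp: continuous_map_in_subtopology)
  then show ?thesis
    unfolding P_def e_def by (simp add: embedding_map_in_subtopology)
qed

lemma metrizable_space_countable_cube:
  assumes "countable K"
  shows "metrizable_space (product_topology (\<lambda>_. top_of_set {0..1::real}) K)"
proof -
  have "topspace (product_topology (\<lambda>_. top_of_set {0..1::real}) K) \<noteq> {}"
    by (simp add: PiE_eq_empty_iff)
  moreover have "countable {k \<in> K. \<nexists>a. topspace (top_of_set {0..1::real}) \<subseteq> {a}}"
    using assms by (rule countable_subset[rotated]) (rule Collect_restrict)
  moreover have "metrizable_space (top_of_set {0..1::real})"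
    by (simp add: metrizable_space_subtopology metrizable_space_euclidean)
  ultimately show ?thesis
    by (rule metrizable_topology_D[of "\<lambda>_. top_of_set {0..1::real}" K])
qed

lemma regular_space_open_closure_subset:
  assumes "regular_space X" "openin X U" "x \<in> U"
  obtains W where "openin X W" "x \<in> W" "X closure_of W \<subseteq> U"
proof -
  have "neighbourhood_base_of (closedin X) X"
    by (simp add: neighbourhood_base_of_closedin \<open>regular_space X\<close>)
  then obtain W C where "openin X W" "closedin X C" "x \<in> W" "W \<subseteq> C" "C \<subseteq> U"
    using assms(2,3) unfolding neighbourhood_base_of by meson
  then show thesis
    using closure_of_minimal that by (metis order_trans)
qed

lemma regular_space_base_nested_closure:
  assumes "regular_space X" and open_base: "\<And>V. V \<in> \<B> \<Longrightarrow> openin X V"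
    and base: "\<And>U x. openin X U \<Longrightarrow> x \<in> U \<Longrightarrow> \<exists>B\<in>\<B>. x \<in> B \<and> B \<subseteq> U"
    and "openin X U" "x \<in> U"
  obtains B B' where "B \<in> \<B>" "B' \<in> \<B>" "x \<in> B" "X closure_of B \<subseteq> B'" "B' \<subseteq> U"
proof -
  obtain B' where B': "B' \<in> \<B>" "x \<in> B'" "B' \<subseteq> U"
    using base assms(4,5) by blast
  obtain W where W: "openin X W" "x \<in> W" "X closure_of W \<subseteq> B'"
    using regular_space_open_closure_subset[OF assms(1) open_base[OF B'(1)] B'(2)] by blast
  obtain B where B: "B \<in> \<B>" "x \<in> B" "B \<subseteq> W"
    using base W(1,2) by blast
  have "X closure_of B \<subseteq> B'"
    using closure_of_mono[OF B(3)] W(3) by blast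
  with B B' that show thesis by blast
qed

lemma first_countable_local_base:
  assumes "first_countable X" "x \<in> topspace X"
  obtains \<B> where "countable \<B>" "\<And>B. B \<in> \<B> \<Longrightarrow> openin X B \<and> x \<in> B"
    "\<And>U. openin X U \<Longrightarrow> x \<in> U \<Longrightarrow> \<exists>B\<in>\<B>. B \<subseteq> U"
proof -
  obtain \<B> where "countable \<B>" "\<forall>V\<in>\<B>. openin X V"
      "\<forall>U. openin X U \<and> x \<in> U \<longrightarrow> (\<exists>V\<in>\<B>. x \<in> V \<and> V \<subseteq> U)"
    using assms unfolding first_countable_def by metis
  moreover have "countable {B \<in> \<B>. x \<in> B}"
    using \<open>countable \<B>\<close> by simp
  ultimately show thesis
    using that[of "{B \<in> \<B>. x \<in> B}"] by blast
qed

lemma regular_second_countable_separating_maps: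
  assumes "regular_space X" "second_countable X"
  obtains K :: "('a set \<times> 'a set) set" and f :: "'a set \<times> 'a set \<Rightarrow> 'a \<Rightarrow> real"
  where "countable K"
    "\<And>k. k \<in> K \<Longrightarrow> continuous_map X (top_of_set {0..1}) (f k)"
    "\<And>U x. openin X U \<Longrightarrow> x \<in> U \<Longrightarrow> \<exists>k\<in>K. f k x = 0 \<and> (\<forall>y \<in> topspace X - U. f k y = 1)"
proof -
  obtain \<B> where \<B>: "countable \<B> \<and> (\<forall>V\<in>\<B>. openin X V) \<and>
      (\<forall>U x. openin X U \<and> x \<in> U \<longrightarrow> (\<exists>B\<in>\<B>. x \<in> B \<and> B \<subseteq> U))"
    using \<open>second_countable X\<close> unfolding second_countable_def by (elim exE) (rule that)
  then have "countable \<B>" and open_base: "\<And>V. V \<in> \<B> \<Longrightarrow> openin X V"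
    and base: "\<And>U x. openin X U \<Longrightarrow> x \<in> U \<Longrightarrow> \<exists>B\<in>\<B>. x \<in> B \<and> B \<subseteq> U"
    by simp_all
  have "normal_space X"
    using assms by (simp add: regular_Lindelof_imp_normal_space second_countable_imp_Lindelof_space)
  define K where "K = {(B, B') \<in> \<B> \<times> \<B>. X closure_of B \<subseteq> B'}"
  have "K \<subseteq> \<B> \<times> \<B>"
    by (auto simp: K_def)
  then have "countable K"
    using \<open>countable \<B>\<close> by (meson countable_SIGMA countable_subset)
  have "\<exists>g. continuous_map X (top_of_set {0..1}) g \<and>
            g ` (X closure_of fst k) \<subseteq> {0} \<and> g ` (topspace X - snd k) \<subseteq> {1::real}"
    if "k \<in> K" for k
  proof -
    have "closedin X (topspace X - snd k)" "disjnt (X closure_of fst k) (topspace X - snd k)"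
      using that open_base by (auto simp: K_def disjnt_def)
    then obtain g where "continuous_map X (top_of_set {0..1}) g"
        "g ` (X closure_of fst k) \<subseteq> {0}" "g ` (topspace X - snd k) \<subseteq> {1::real}"
      using Urysohn_lemma[OF \<open>normal_space X\<close> closedin_closure_of _ _ zero_le_one] by blast
    then show ?thesis by blast
  qed
  then obtain f where f: "\<And>k. k \<in> K \<Longrightarrow> continuous_map X (top_of_set {0..1}) (f k) \<and>
      f k ` (X closure_of fst k) \<subseteq> {0} \<and> f k ` (topspace X - snd k) \<subseteq> {1::real}"
    by metis
  show thesis
  proof (rule that[OF \<open>countable K\<close>])
    show "continuous_map X (top_of_set {0..1}) (f k)" if "k \<in> K" for k
      using f[OF that] by simp
    fix U x assume U: "openin X U" "x \<in> U"
    obtain B B' where BB': "B \<in> \<B>" "B' \<in> \<B>" "x \<in> B" "X closure_of B \<subseteq> B'" "B' \<subseteq> U"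
      using regular_space_base_nested_closure[OF \<open>regular_space X\<close> open_base base U] by blast
    then have "(B, B') \<in> K"
      by (simp add: K_def)
    moreover have "x \<in> X closure_of B"
      using BB'(3) closure_of_subset[OF openin_subset[OF open_base[OF BB'(1)]]] by blast
    ultimately show "\<exists>k\<in>K. f k x = 0 \<and> (\<forall>y \<in> topspace X - U. f k y = 1)"
      using f[of "(B, B')"] BB'(5) by (intro bexI[of _ "(B, B')"]) auto
  qed
qed

theorem regular_second_countable_imp_metrizable_space:
  assumes "regular_space X" "t1_space X" "second_countable X"
  shows "metrizable_space X"
proof -
  obtain K :: "('a set \<times> 'a set) set" and f :: "'a set \<times> 'a set \<Rightarrow> 'a \<Rightarrow> real"
    where "countable K"
    and cont: "\<And>k. k \<in> K \<Longrightarrow> continuous_map X (top_of_set {0..1}) (f k)"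
    and sep: "\<And>U x. openin X U \<Longrightarrow> x \<in> U \<Longrightarrow> \<exists>k\<in>K. f k x = 0 \<and> (\<forall>y \<in> topspace X - U. f k y = 1)"
    using regular_second_countable_separating_maps[OF assms(1,3)] by blast
  let ?cube = "product_topology (\<lambda>_. top_of_set {0..1::real}) K"
  have "X homeomorphic_space subtopology ?cube ((\<lambda>x. \<lambda>k\<in>K. f k x) ` topspace X)"
    using embedding_map_into_cube[OF assms(2) cont sep] by (rule embedding_map_imp_homeomorphic_space)
  moreover have "metrizable_space (subtopology ?cube ((\<lambda>x. \<lambda>k\<in>K. f k x) ` topspace X))"
    by (rule metrizable_space_subtopology[OF metrizable_space_countable_cube[OF \<open>countable K\<close>]])
  ultimately show ?thesis
    by (rule homeomorphic_metrizable_space[THEN iffD2])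
qed

lemma continuous_map_prod_nbhd_square:
  assumes "continuous_map (prod_topology T T) Y \<phi>" "openin Y N" "\<phi> (e, e) \<in> N" "e \<in> topspace T"
  obtains V where "openin T V" "e \<in> V" "\<And>a b. a \<in> V \<Longrightarrow> b \<in> V \<Longrightarrow> \<phi> (a, b) \<in> N"
proof -
  have "openin (prod_topology T T) {z \<in> topspace (prod_topology T T). \<phi> z \<in> N}"
    using assms(1,2) by (rule openin_continuous_map_preimage)
  moreover have "(e, e) \<in> {z \<in> topspace (prod_topology T T). \<phi> z \<in> N}"
    using assms(3,4) by simp
  ultimately have "\<exists>V1 V2. openin T V1 \<and> openin T V2 \<and> e \<in> V1 \<and> e \<in> V2 \<and>
      V1 \<times> V2 \<subseteq> {z \<in> topspace (prod_topology T T). \<phi> z \<in> N}"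
    unfolding openin_prod_topology_alt by simp
  then obtain V1 V2 where V: "openin T V1" "openin T V2" "e \<in> V1" "e \<in> V2"
      "V1 \<times> V2 \<subseteq> {z \<in> topspace (prod_topology T T). \<phi> z \<in> N}"
    by blast
  show thesis
  proof (rule that[of "V1 \<inter> V2"])
    show "openin T (V1 \<inter> V2)" "e \<in> V1 \<inter> V2"
      using V(1-4) by (simp_all add: openin_Int)
    show "\<phi> (a, b) \<in> N" if "a \<in> V1 \<inter> V2" "b \<in> V1 \<inter> V2" for a b
      using that V(5) by blast
  qed
qed

lemma baire_space_closed_cover_interior:
  assumes "baire_space X" "countable A" "topspace X \<noteq> {}"
    and closed: "\<And>a. a \<in> A \<Longrightarrow> closedin X (F a)"
    and cover: "topspace X \<subseteq> (\<Union>a\<in>A. F a)"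
  obtains a where "a \<in> A" "X interior_of F a \<noteq> {}"
proof (rule ccontr)
  assume "\<not> thesis"
  then have empty_interior: "\<And>a. a \<in> A \<Longrightarrow> X interior_of F a = {}"
    using that by blast
  define \<U> where "\<U> = (\<lambda>a. topspace X - F a) ` A"
  have "countable \<U>"
    unfolding \<U>_def using \<open>countable A\<close> by simp
  moreover have "openin X U \<and> X closure_of U = topspace X" if U: "U \<in> \<U>" for U
  proof -
    obtain a where "a \<in> A" "U = topspace X - F a"
      using U by (auto simp: \<U>_def)
    then show ?thesis
      using closed[of a] empty_interior[of a] by (simp add: closure_of_complement openin_diff)
  qed
  ultimately have "X closure_of (topspace X \<inter> \<Inter>\<U>) = topspace X"
    using \<open>baire_space X\<close> unfolding baire_space_def by blast
  moreover have "topspace X \<inter> \<Inter>\<U> = {}"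
    using cover by (auto simp: \<U>_def)
  ultimately show False
    using \<open>topspace X \<noteq> {}\<close> by simp
qed

lemma omega_narrowE:
  assumes "omega_narrow G T" "openin T U" "\<one>\<^bsub>G\<^esub> \<in> U"
  obtains A where "countable A" "A \<subseteq> carrier G" "A <#>\<^bsub>G\<^esub> U = carrier G"
proof -
  have "\<exists>A. countable A \<and> A \<subseteq> carrier G \<and> A <#>\<^bsub>G\<^esub> U = carrier G"
    using assms unfolding omega_narrow_def by simp
  with that show thesis
    by blast
qed

locale continuous_group_action =
  fixes G :: "('g, 'm) monoid_scheme" (structure)
    and T :: "'g topology" and X :: "'a topology" and act :: "'g \<Rightarrow> 'a \<Rightarrow> 'a"
  assumes topological_group: "topological_group G T"
    and continuous_action: "continuous_action G T X act"
begin

sublocale group G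
  using topological_group by (simp add: topological_group_def)

lemma topspace_group: "topspace T = carrier G"
  using topological_group by (simp add: topological_group_def)

lemma act_in_topspace: "g \<in> carrier G \<Longrightarrow> x \<in> topspace X \<Longrightarrow> act g x \<in> topspace X"
  using continuous_action by (simp add: continuous_action_def)

lemma act_one: "x \<in> topspace X \<Longrightarrow> act \<one> x = x"
  using continuous_action by (simp add: continuous_action_def)

lemma act_mult:
  "g \<in> carrier G \<Longrightarrow> h \<in> carrier G \<Longrightarrow> x \<in> topspace X \<Longrightarrow> act (g \<otimes> h) x = act g (act h x)"
  using continuous_action by (simp add: continuous_action_def)

lemma continuous_map_orbit: "x \<in> topspace X \<Longrightarrow> continuous_map T X (\<lambda>g. act g x)"
  using continuous_map_compose[of T "prod_topology T X" "\<lambda>g. (g, x)" X "\<lambda>(g, x). act g x"]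
    continuous_action
  by (simp add: continuous_action_def o_def continuous_map_pairedI)

lemma continuous_map_act: "g \<in> carrier G \<Longrightarrow> continuous_map X X (act g)"
  using continuous_map_compose[of X "prod_topology T X" "\<lambda>x. (g, x)" X "\<lambda>(g, x). act g x"]
    continuous_action topspace_group
  by (simp add: continuous_action_def o_def continuous_map_pairedI)

lemma homeomorphic_map_act: "g \<in> carrier G \<Longrightarrow> homeomorphic_map X X (act g)"
  unfolding homeomorphic_map_maps homeomorphic_maps_def
  by (rule exI[of _ "act (inv g)"])
     (auto simp: continuous_map_act act_mult[symmetric] act_one)

lemma continuous_map_inv_mult: "continuous_map (prod_topology T T) T (\<lambda>(a, b). inv a \<otimes> b)"
proof -
  have "continuous_map T T (\<lambda>a. inv a)" "continuous_map (prod_topology T T) T (\<lambda>(a, b). a \<otimes> b)"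
    using topological_group by (simp_all add: topological_group_def)
  then have "continuous_map (prod_topology T T) T ((\<lambda>(a, b). a \<otimes> b) \<circ> (\<lambda>z. (inv (fst z), snd z)))"
    by (intro continuous_map_compose[of _ "prod_topology T T"] continuous_map_pairedI continuous_map_snd
        continuous_map_compose[OF continuous_map_fst, unfolded o_def])
  then show ?thesis
    by (simp add: o_def case_prod_unfold)
qed

lemma nbhd_mult_subset:
  assumes "openin T N" "\<one> \<in> N"
  obtains V where "openin T V" "\<one> \<in> V" "\<And>a b. a \<in> V \<Longrightarrow> b \<in> V \<Longrightarrow> a \<otimes> b \<in> N"
  using continuous_map_prod_nbhd_square[of T T "\<lambda>(a, b). a \<otimes> b" N \<one>] assms
    topological_group topspace_group
  by (auto simp: topological_group_def)

lemma nbhd_inv_mult_subset: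
  assumes "openin T N" "\<one> \<in> N"
  obtains V where "openin T V" "\<one> \<in> V" "\<And>a b. a \<in> V \<Longrightarrow> b \<in> V \<Longrightarrow> inv a \<otimes> b \<in> N"
  using continuous_map_prod_nbhd_square[OF continuous_map_inv_mult assms(1)] assms(2) topspace_group
  by auto

lemma image_act_orbit:
  assumes "g \<in> carrier G" "S \<subseteq> carrier G" "x \<in> topspace X"
  shows "act g ` (\<lambda>h. act h x) ` S = (\<lambda>h. act h x) ` (g <# S)"
  using assms by (force simp: l_coset_def act_mult)

lemma image_act_closure_orbit:
  assumes "g \<in> carrier G" "S \<subseteq> carrier G" "x \<in> topspace X"
  shows "act g ` (X closure_of ((\<lambda>h. act h x) ` S)) = X closure_of ((\<lambda>h. act h x) ` (g <# S))"
proof -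
  have "(\<lambda>h. act h x) ` S \<subseteq> topspace X"
    using assms act_in_topspace by auto
  then show ?thesis
    using homeomorphic_map_closure_of[OF homeomorphic_map_act[OF assms(1)]] image_act_orbit[OF assms]
    by metis
qed

lemma image_act_interior_closure_orbit:
  assumes "g \<in> carrier G" "S \<subseteq> carrier G" "x \<in> topspace X"
  shows "act g ` (X interior_of (X closure_of ((\<lambda>h. act h x) ` S)))
       = X interior_of (X closure_of ((\<lambda>h. act h x) ` (g <# S)))"
  using homeomorphic_map_interior_of[OF homeomorphic_map_act[OF assms(1)] closure_of_subset_topspace]
    image_act_closure_orbit[OF assms]
  by metis

lemma orbit_translate_in_interior_closure:
  assumes "transitive_action G X act" "baire_space X" and x: "x \<in> topspace X"
    and "countable A" "A \<subseteq> carrier G" "V \<subseteq> carrier G" and AV: "A <#> V = carrier G"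
  obtains a v where "a \<in> A" "v \<in> V"
    "act (a \<otimes> v) x \<in> X interior_of (X closure_of ((\<lambda>g. act g x) ` (a <# V)))"
proof -
  define F where "F a = X closure_of ((\<lambda>g. act g x) ` (a <# V))" for a
  have cover: "topspace X \<subseteq> (\<Union>a\<in>A. F a)"
  proof
    fix y assume "y \<in> topspace X"
    then obtain g where g: "g \<in> carrier G" "act g x = y"
      using \<open>transitive_action G X act\<close> x unfolding transitive_action_def by blast
    then have "g \<in> A <#> V"
      using AV by simp
    then obtain a v where av: "a \<in> A" "v \<in> V" "g = a \<otimes> v"
      unfolding set_mult_def by blast
    then have "a \<otimes> v \<in> a <# V"
      unfolding l_coset_def by blast
    then have "y \<in> (\<lambda>g. act g x) ` (a <# V)"
      using g(2) av(3) by blast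
    moreover have "a <# V \<subseteq> carrier G"
      using av(1) \<open>A \<subseteq> carrier G\<close> \<open>V \<subseteq> carrier G\<close> l_coset_subset_G by blast
    then have "(\<lambda>g. act g x) ` (a <# V) \<subseteq> topspace X"
      using act_in_topspace x by blast
    ultimately have "y \<in> F a"
      unfolding F_def using closure_of_subset by blast
    then show "y \<in> (\<Union>a\<in>A. F a)"
      using av(1) by blast
  qed
  have closed: "closedin X (F a)" for a
    unfolding F_def by simp
  have "topspace X \<noteq> {}"
    using x by blast
  then obtain a where "a \<in> A" and nonempty: "X interior_of F a \<noteq> {}"
    by (rule baire_space_closed_cover_interior[OF \<open>baire_space X\<close> \<open>countable A\<close> _ closed cover])
  have "X interior_of F a \<inter> F a \<noteq> {}"
    using nonempty by (simp add: Int_absorb2 interior_of_subset)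
  then have "X interior_of F a \<inter> (\<lambda>g. act g x) ` (a <# V) \<noteq> {}"
    unfolding F_def by (simp add: openin_Int_closure_of_eq_empty)
  then obtain v where "v \<in> V" "act (a \<otimes> v) x \<in> X interior_of F a"
    unfolding l_coset_def by blast
  then show thesis
    using that \<open>a \<in> A\<close> unfolding F_def by blast
qed

lemma point_in_interior_closure_orbit:
  assumes "transitive_action G X act" "omega_narrow G T" "baire_space X"
    and x: "x \<in> topspace X" and U: "openin T U" "\<one> \<in> U"
  shows "x \<in> X interior_of (X closure_of ((\<lambda>g. act g x) ` U))"
proof -
  obtain V where V: "openin T V" "\<one> \<in> V" and VU: "\<And>a b. a \<in> V \<Longrightarrow> b \<in> V \<Longrightarrow> inv a \<otimes> b \<in> U"
    using nbhd_inv_mult_subset[OF U] by blast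
  have V_carrier: "V \<subseteq> carrier G"
    using openin_subset[OF V(1)] topspace_group by simp
  obtain A where A: "countable A" "A \<subseteq> carrier G" "A <#> V = carrier G"
    by (rule omega_narrowE[OF \<open>omega_narrow G T\<close> V])
  obtain a v where "a \<in> A" "v \<in> V"
      and v: "act (a \<otimes> v) x \<in> X interior_of (X closure_of ((\<lambda>g. act g x) ` (a <# V)))"
    by (rule orbit_translate_in_interior_closure[OF assms(1,3) x A(1,2) V_carrier A(3)])
  have a: "a \<in> carrier G" and "v \<in> carrier G"
    using \<open>a \<in> A\<close> \<open>A \<subseteq> carrier G\<close> \<open>v \<in> V\<close> V_carrier by auto
  define h where "h = inv (a \<otimes> v)"
  have h: "h \<in> carrier G"
    unfolding h_def using a \<open>v \<in> carrier G\<close> by simp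
  have "h <# (a <# V) = inv v <# V"
    unfolding h_def using a \<open>v \<in> carrier G\<close> V_carrier
    by (simp add: lcos_m_assoc inv_mult_group m_assoc)
  also have "\<dots> \<subseteq> U"
    using VU \<open>v \<in> V\<close> unfolding l_coset_def by blast
  finally have hV: "h <# (a <# V) \<subseteq> U" .
  have "x = act h (act (a \<otimes> v) x)"
    unfolding h_def using a \<open>v \<in> carrier G\<close> x by (simp add: act_mult[symmetric] act_one)
  also have "\<dots> \<in> act h ` (X interior_of (X closure_of ((\<lambda>g. act g x) ` (a <# V))))"
    using v by (rule imageI)
  also have "\<dots> = X interior_of (X closure_of ((\<lambda>g. act g x) ` (h <# (a <# V))))"
    using image_act_interior_closure_orbit[OF h l_coset_subset_G[OF V_carrier a] x] .
  also have "\<dots> \<subseteq> X interior_of (X closure_of ((\<lambda>g. act g x) ` U))"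
    using hV by (intro interior_of_mono closure_of_mono image_mono)
  finally show ?thesis .
qed

lemma act_in_interior_closure_orbit_set_mult:
  assumes "transitive_action G X act" "omega_narrow G T" "baire_space X"
    and x: "x \<in> topspace X" and U: "openin T U" "\<one> \<in> U" and "u \<in> U"
  shows "act u x \<in> X interior_of (X closure_of ((\<lambda>g. act g x) ` (U <#> U)))"
proof -
  have "U \<subseteq> carrier G"
    using openin_subset[OF U(1)] topspace_group by simp
  then have u: "u \<in> carrier G"
    using \<open>u \<in> U\<close> by blast
  have "act u x \<in> act u ` (X interior_of (X closure_of ((\<lambda>g. act g x) ` U)))"
    using point_in_interior_closure_orbit[OF assms(1-6)] by blast
  also have "\<dots> = X interior_of (X closure_of ((\<lambda>g. act g x) ` (u <# U)))"
    using image_act_interior_closure_orbit[OF u \<open>U \<subseteq> carrier G\<close> x] .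
  also have "\<dots> \<subseteq> X interior_of (X closure_of ((\<lambda>g. act g x) ` (U <#> U)))"
    using \<open>u \<in> U\<close>
    by (intro interior_of_mono closure_of_mono image_mono) (auto simp: l_coset_def set_mult_def)
  finally show ?thesis .
qed

lemma nbhd_closure_orbit_subset:
  assumes "regular_space X" "openin X B" "x \<in> B"
  obtains U where "openin T U" "\<one> \<in> U"
    "\<And>u. u \<in> U \<Longrightarrow> X closure_of ((\<lambda>g. act g x) ` (inv u <# (U <#> U))) \<subseteq> B"
proof -
  obtain W where W: "openin X W" "x \<in> W" "X closure_of W \<subseteq> B"
    by (rule regular_space_open_closure_subset[OF assms])
  have x: "x \<in> topspace X"
    using openin_subset[OF W(1)] W(2) by blast
  define N where "N = {g \<in> topspace T. act g x \<in> W}"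
  have "openin T N"
    unfolding N_def using continuous_map_orbit[OF x] W(1) by (rule openin_continuous_map_preimage)
  moreover have "\<one> \<in> N"
    unfolding N_def using topspace_group act_one[OF x] W(2) by simp
  ultimately obtain U1 where U1: "openin T U1" "\<one> \<in> U1" "\<And>a b. a \<in> U1 \<Longrightarrow> b \<in> U1 \<Longrightarrow> inv a \<otimes> b \<in> N"
    using nbhd_inv_mult_subset by blast
  obtain U2 where U2: "openin T U2" "\<one> \<in> U2" "\<And>a b. a \<in> U2 \<Longrightarrow> b \<in> U2 \<Longrightarrow> a \<otimes> b \<in> U1"
    using nbhd_mult_subset[OF U1(1,2)] by blast
  show thesis
  proof (rule that[of "U1 \<inter> U2"])
    show "openin T (U1 \<inter> U2)"
      using U1(1) U2(1) by (rule openin_Int)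
    show "\<one> \<in> U1 \<inter> U2"
      using U1(2) U2(2) by (rule IntI)
    fix u assume "u \<in> U1 \<inter> U2"
    then have "inv u \<otimes> (v \<otimes> w) \<in> N" if "v \<in> U1 \<inter> U2" "w \<in> U1 \<inter> U2" for v w
      using U1(3) U2(3) that by blast
    then have "(\<lambda>g. act g x) ` (inv u <# ((U1 \<inter> U2) <#> (U1 \<inter> U2))) \<subseteq> W"
      unfolding l_coset_def set_mult_def N_def by blast
    then show "X closure_of ((\<lambda>g. act g x) ` (inv u <# ((U1 \<inter> U2) <#> (U1 \<inter> U2)))) \<subseteq> B"
      using closure_of_mono W(3) by blast
  qed
qed

lemma image_act_interior_closure_orbit_subset:
  assumes "g \<in> carrier G" "u \<in> carrier G" "S \<subseteq> carrier G" "x \<in> topspace X"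
    and "X closure_of ((\<lambda>h. act h x) ` (inv u <# S)) \<subseteq> {z \<in> topspace X. act g z \<in> N}"
  shows "act (g \<otimes> inv u) ` (X interior_of (X closure_of ((\<lambda>h. act h x) ` S))) \<subseteq> N"
proof
  let ?I = "X interior_of (X closure_of ((\<lambda>h. act h x) ` S))"
  have "act (inv u) ` ?I \<subseteq> act (inv u) ` (X closure_of ((\<lambda>h. act h x) ` S))"
    by (intro image_mono interior_of_subset)
  also have "\<dots> = X closure_of ((\<lambda>h. act h x) ` (inv u <# S))"
    using image_act_closure_orbit assms(2-4) by simp
  finally have inv_u_I: "act (inv u) ` ?I \<subseteq> {z \<in> topspace X. act g z \<in> N}"
    using assms(5) by blast
  fix y assume "y \<in> act (g \<otimes> inv u) ` ?I"
  then obtain z where z: "z \<in> ?I" "y = act (g \<otimes> inv u) z"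
    by blast
  then have "y = act g (act (inv u) z)"
    using act_mult[OF assms(1) inv_closed[OF assms(2)]] subsetD[OF interior_of_subset_topspace z(1)]
    by simp
  then show "y \<in> N"
    using inv_u_I z(1) by blast
qed

lemma translate_interior_closure_orbit_nbhd:
  assumes "transitive_action G X act" "omega_narrow G T" "baire_space X" and x: "x \<in> topspace X"
    and U: "openin T U" "\<one> \<in> U"
    and UB: "\<And>u. u \<in> U \<Longrightarrow> X closure_of ((\<lambda>h. act h x) ` (inv u <# (U <#> U))) \<subseteq> B"
    and A: "A \<subseteq> carrier G" "A <#> U = carrier G"
    and g: "g \<in> carrier G" and B: "B \<subseteq> {z \<in> topspace X. act g z \<in> N}"
  obtains a where "a \<in> A"
    "act g x \<in> act a ` (X interior_of (X closure_of ((\<lambda>h. act h x) ` (U <#> U))))"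
    "act a ` (X interior_of (X closure_of ((\<lambda>h. act h x) ` (U <#> U)))) \<subseteq> N"
proof -
  let ?J = "X interior_of (X closure_of ((\<lambda>h. act h x) ` (U <#> U)))"
  have U_carrier: "U \<subseteq> carrier G"
    using openin_subset[OF U(1)] topspace_group by simp
  obtain a u where au: "a \<in> A" "u \<in> U" "g = a \<otimes> u"
    using A(2) g unfolding set_mult_def by blast
  have a_carrier: "a \<in> carrier G" and u: "u \<in> carrier G"
    using A(1) au(1,2) U_carrier by auto
  then have a: "a = g \<otimes> inv u"
    using au(3) by (simp add: m_assoc)
  have "act u x \<in> ?J"
    using act_in_interior_closure_orbit_set_mult[OF assms(1-3) x U au(2)] .
  moreover have "act g x = act a (act u x)"
    using au(3) act_mult[OF a_carrier u x] by simp
  ultimately have "act g x \<in> act a ` ?J"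
    by simp
  moreover have "act a ` ?J \<subseteq> N"
    unfolding a
  proof (rule image_act_interior_closure_orbit_subset[OF g u setmult_subset_G[OF U_carrier U_carrier] x])
    show "X closure_of ((\<lambda>h. act h x) ` (inv u <# (U <#> U))) \<subseteq> {z \<in> topspace X. act g z \<in> N}"
      using UB[OF au(2)] B by (rule order_trans)
  qed
  ultimately show thesis
    using that au(1) by blast
qed

lemma nbhd_closure_orbit_subset_family:
  assumes "omega_narrow G T" "regular_space X" and nbhds: "\<And>B. B \<in> \<B> \<Longrightarrow> openin X B \<and> x \<in> B"
  obtains U A where
    "\<forall>B\<in>\<B>. openin T (U B) \<and> \<one> \<in> U B \<and>
      (\<forall>u\<in>U B. X closure_of ((\<lambda>g. act g x) ` (inv u <# (U B <#> U B))) \<subseteq> B)"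
    "\<forall>B\<in>\<B>. countable (A B) \<and> A B \<subseteq> carrier G \<and> A B <#> U B = carrier G"
proof -
  have "\<forall>B\<in>\<B>. \<exists>U. openin T U \<and> \<one> \<in> U \<and>
      (\<forall>u\<in>U. X closure_of ((\<lambda>g. act g x) ` (inv u <# (U <#> U))) \<subseteq> B)"
  proof
    fix B assume "B \<in> \<B>"
    then have "openin X B" "x \<in> B"
      using nbhds by auto
    then obtain U where "openin T U" "\<one> \<in> U"
        "\<And>u. u \<in> U \<Longrightarrow> X closure_of ((\<lambda>g. act g x) ` (inv u <# (U <#> U))) \<subseteq> B"
      using nbhd_closure_orbit_subset[OF \<open>regular_space X\<close>] by blast
    then show "\<exists>U. openin T U \<and> \<one> \<in> U \<and>
        (\<forall>u\<in>U. X closure_of ((\<lambda>g. act g x) ` (inv u <# (U <#> U))) \<subseteq> B)"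
      by blast
  qed
  then have "\<exists>U. \<forall>B\<in>\<B>. openin T (U B) \<and> \<one> \<in> U B \<and>
      (\<forall>u\<in>U B. X closure_of ((\<lambda>g. act g x) ` (inv u <# (U B <#> U B))) \<subseteq> B)"
    by (rule bchoice)
  then obtain U where U: "\<forall>B\<in>\<B>. openin T (U B) \<and> \<one> \<in> U B \<and>
      (\<forall>u\<in>U B. X closure_of ((\<lambda>g. act g x) ` (inv u <# (U B <#> U B))) \<subseteq> B)"
    ..
  have "\<forall>B\<in>\<B>. \<exists>A. countable A \<and> A \<subseteq> carrier G \<and> A <#> U B = carrier G"
  proof
    fix B assume "B \<in> \<B>"
    then have "openin T (U B)" "\<one> \<in> U B"
      using U by auto
    then obtain A where "countable A" "A \<subseteq> carrier G" "A <#> U B = carrier G"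
      by (rule omega_narrowE[OF \<open>omega_narrow G T\<close>])
    then show "\<exists>A. countable A \<and> A \<subseteq> carrier G \<and> A <#> U B = carrier G"
      by blast
  qed
  then have "\<exists>A. \<forall>B\<in>\<B>. countable (A B) \<and> A B \<subseteq> carrier G \<and> A B <#> U B = carrier G"
    by (rule bchoice)
  then obtain A where A: "\<forall>B\<in>\<B>. countable (A B) \<and> A B \<subseteq> carrier G \<and> A B <#> U B = carrier G"
    ..
  with U show thesis
    by (rule that)
qed

lemma second_countable_space:
  assumes "transitive_action G X act" "omega_narrow G T" "baire_space X"
    and "regular_space X" "first_countable X"
  shows "second_countable X"
proof (cases "topspace X = {}")
  case True
  then show ?thesis
    unfolding second_countable_def by (metis countable_empty empty_iff openin_subset subsetD)
next
  case False
  then obtain x where x: "x \<in> topspace X"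
    by blast
  obtain \<B> where "countable \<B>" and \<B>: "\<And>B. B \<in> \<B> \<Longrightarrow> openin X B \<and> x \<in> B"
    and local_base: "\<And>N. openin X N \<Longrightarrow> x \<in> N \<Longrightarrow> \<exists>B\<in>\<B>. B \<subseteq> N"
    using first_countable_local_base[OF \<open>first_countable X\<close> x] by blast
  obtain U A where U: "\<forall>B\<in>\<B>. openin T (U B) \<and> \<one> \<in> U B \<and>
      (\<forall>u\<in>U B. X closure_of ((\<lambda>g. act g x) ` (inv u <# (U B <#> U B))) \<subseteq> B)"
    and A: "\<forall>B\<in>\<B>. countable (A B) \<and> A B \<subseteq> carrier G \<and> A B <#> U B = carrier G"
    by (rule nbhd_closure_orbit_subset_family[OF assms(2,4) \<B>])
  define J where "J B = X interior_of (X closure_of ((\<lambda>g. act g x) ` (U B <#> U B)))" for B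
  show ?thesis
    unfolding second_countable_def
  proof (intro exI conjI ballI allI impI)
    show "countable ((\<lambda>(B, a). act a ` J B) ` (SIGMA B:\<B>. A B))"
      using \<open>countable \<B>\<close> A by (intro countable_image countable_SIGMA) auto
    show "openin X V" if V: "V \<in> (\<lambda>(B, a). act a ` J B) ` (SIGMA B:\<B>. A B)" for V
    proof -
      obtain B a where "B \<in> \<B>" "a \<in> A B" "V = act a ` J B"
        using V by blast
      moreover have "a \<in> carrier G"
        using A \<open>B \<in> \<B>\<close> \<open>a \<in> A B\<close> by blast
      ultimately show ?thesis
        unfolding J_def
        using homeomorphic_map_openness[OF homeomorphic_map_act interior_of_subset_topspace] by simp
    qed
    fix N y assume N: "openin X N \<and> y \<in> N"
    then have "y \<in> topspace X"
      using openin_subset[of X N] by blast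
    then obtain g where g: "g \<in> carrier G" "act g x = y"
      using \<open>transitive_action G X act\<close> x unfolding transitive_action_def by blast
    have "openin X {z \<in> topspace X. act g z \<in> N}"
      using openin_continuous_map_preimage[OF continuous_map_act[OF g(1)]] N by blast
    moreover have "x \<in> {z \<in> topspace X. act g z \<in> N}"
      using x g N by simp
    ultimately obtain B where B: "B \<in> \<B>" "B \<subseteq> {z \<in> topspace X. act g z \<in> N}"
      using local_base by blast
    obtain a where a: "a \<in> A B" and y_in: "y \<in> act a ` J B" and sub: "act a ` J B \<subseteq> N"
    proof (rule translate_interior_closure_orbit_nbhd[OF assms(1-3) x _ _ _ _ _ g(1) B(2)])
      show "openin T (U B)" "\<one> \<in> U B"
        "\<And>u. u \<in> U B \<Longrightarrow> X closure_of ((\<lambda>g. act g x) ` (inv u <# (U B <#> U B))) \<subseteq> B"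
        "A B \<subseteq> carrier G" "A B <#> U B = carrier G"
        using U A B(1) by auto
    qed (use g(2) in \<open>auto simp: J_def\<close>)
    show "\<exists>V\<in>(\<lambda>(B, a). act a ` J B) ` (SIGMA B:\<B>. A B). y \<in> V \<and> V \<subseteq> N"
    proof (rule bexI)
      show "y \<in> act a ` J B \<and> act a ` J B \<subseteq> N"
        using y_in sub by (rule conjI)
      show "act a ` J B \<in> (\<lambda>(B, a). act a ` J B) ` (SIGMA B:\<B>. A B)"
        by (rule image_eqI[of _ _ "(B, a)"]) (simp_all add: B(1) a)
    qed
  qed
qed

end

theorem corollary4p12:
  fixes X :: "'a topology" and G :: "('g, 'm) monoid_scheme" and T :: "'g topology"
    and act :: "'g \<Rightarrow> 'a \<Rightarrow> 'a"
  assumes "tychonoff_space X"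
    and "homogeneous_space X"
    and "baire_space X"
    and "first_countable X"
    and "topological_group G T"
    and "tychonoff_space T"
    and "omega_narrow G T"
    and "continuous_action G T X act"
    and "transitive_action G X act"
  shows "separable_space X \<and> metrizable_space X"
proof -
  interpret continuous_group_action G T X act
    using assms(5,8) by unfold_locales
  have "regular_space X" "t1_space X"
    using assms(1) unfolding tychonoff_space_def
    by (simp_all add: completely_regular_imp_regular_space Hausdorff_imp_t1_space)
  moreover have "second_countable X"
    by (rule second_countable_space[OF assms(9,7,3) \<open>regular_space X\<close> assms(4)])
  ultimately show ?thesis
    by (simp add: second_countable_imp_separable_space regular_second_countable_imp_metrizable_space)
qed

end
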